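(* Let $E=\{a,b,c,d,e\}$ (five distinct events) and let $\delta=(E,\emptyset,\mapsto)$ be the DES with $\mapsto=\{\{x,y\}\mapsto e\mid x,y\in\{a,b,c,d\},\ x\neq y\}$. Then there is no SES $\sigma=(E,\#',\to,\triangleright)$ with the same set of events $E$ such that $\mathrm{Traces}(\delta)=\mathrm{Traces}(\sigma)$. In particular, there exist DESs that cannot be translated into an SES over the same events with the same traces.
   Context: Dual event structure (DES): $\delta=(E,\#,\mapsto)$ with $\#\subseteq E^2$ irreflexive and symmetric, $\mapsto\subseteq 2^E\times E$. For $t=e_1\cdots e_n$, $\overline{t_k}=\{e_1,\ldots,e_k\}$. A DES trace is a finite sequence of pairwise distinct events, pairwise not in conflict, such that for every $i$ and every $X$ with $X\mapsto e_i$ we have $X\cap\overline{t_{i-1}}\neq\emptyset$. SES: $\sigma=(E,\#,\to,\triangleright)$ with $\#\subseteq E^2$ irreflexive and symmetric, $\to\subseteq E^2$ an arbitrary binary relation (initial causality), $\triangleright\subseteq E^3$ with $(c,d,t)\in\triangleright$ implying $c\to t$. $\mathrm{ic}(e)=\{e'\mid e'\to e\}$, $\mathrm{dc}(H,e)=\{e'\mid\exists d\in H.(e',d,e)\in\triangleright\}$. An SES trace is a finite sequence $e_1\cdots e_n$ of pairwise distinct events of $E$, pairwise not in conflict, with $\mathrm{ic}(e_i)\setminus\mathrm{dc}(\overline{t_{i-1}},e_i)\subseteq\overline{t_{i-1}}$ for all $i$. *)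

theory Defs
  imports Main
begin

text \<open>Dual event structures: events E, conflict C, enabling relation En (pairs (X, e) meaning X |-> e).\<close>

definition des :: "'e set \<Rightarrow> ('e \<times> 'e) set \<Rightarrow> ('e set \<times> 'e) set \<Rightarrow> bool" where
  "des E C En \<longleftrightarrow> C \<subseteq> E \<times> E \<and> irrefl C \<and> sym C \<and>
     (\<forall>(X, e) \<in> En. X \<subseteq> E \<and> e \<in> E)"

definition des_trace :: "'e set \<Rightarrow> ('e \<times> 'e) set \<Rightarrow> ('e set \<times> 'e) set \<Rightarrow> 'e list \<Rightarrow> bool" where
  "des_trace E C En t \<longleftrightarrow> distinct t \<and> set t \<subseteq> E \<and>
     (\<forall>i < length t. \<forall>j < length t. (t ! i, t ! j) \<notin> C) \<and>
     (\<forall>i < length t. \<forall>X. (X, t ! i) \<in> En \<longrightarrow> X \<inter> set (take i t) \<noteq> {})"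

definition des_traces :: "'e set \<Rightarrow> ('e \<times> 'e) set \<Rightarrow> ('e set \<times> 'e) set \<Rightarrow> 'e list set" where
  "des_traces E C En = {t. des_trace E C En t}"

text \<open>Shrinking causality event structures: events E, conflict C, initial causality IC,
  shrinking causality SC (triples (c, d, t) meaning c |> [d] t).\<close>

definition ses :: "'e set \<Rightarrow> ('e \<times> 'e) set \<Rightarrow> ('e \<times> 'e) set \<Rightarrow> ('e \<times> 'e \<times> 'e) set \<Rightarrow> bool" where
  "ses E C IC SC \<longleftrightarrow> C \<subseteq> E \<times> E \<and> irrefl C \<and> sym C \<and> IC \<subseteq> E \<times> E \<and>
     SC \<subseteq> E \<times> E \<times> E \<and> (\<forall>(c, d, t) \<in> SC. (c, t) \<in> IC)"

definition ic :: "('e \<times> 'e) set \<Rightarrow> 'e \<Rightarrow> 'e set" where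
  "ic IC e = {e'. (e', e) \<in> IC}"

definition dc :: "('e \<times> 'e \<times> 'e) set \<Rightarrow> 'e set \<Rightarrow> 'e \<Rightarrow> 'e set" where
  "dc SC H e = {e'. \<exists>d \<in> H. (e', d, e) \<in> SC}"

definition ses_trace :: "'e set \<Rightarrow> ('e \<times> 'e) set \<Rightarrow> ('e \<times> 'e) set \<Rightarrow> ('e \<times> 'e \<times> 'e) set \<Rightarrow> 'e list \<Rightarrow> bool" where
  "ses_trace E C IC SC t \<longleftrightarrow> distinct t \<and> set t \<subseteq> E \<and>
     (\<forall>i < length t. \<forall>j < length t. (t ! i, t ! j) \<notin> C) \<and>
     (\<forall>i < length t. ic IC (t ! i) - dc SC (set (take i t)) (t ! i) \<subseteq> set (take i t))"

definition ses_traces :: "'e set \<Rightarrow> ('e \<times> 'e) set \<Rightarrow> ('e \<times> 'e) set \<Rightarrow> ('e \<times> 'e \<times> 'e) set \<Rightarrow> 'e list set" where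
  "ses_traces E C IC SC = {t. ses_trace E C IC SC t}"

end

theory Submission
  imports Defs
begin

text \<open>In an SES, \<open>e\<close> may occur after the events \<open>H\<close> iff every initial cause of \<open>e\<close> is covered
  by \<open>H\<close>: it lies in \<open>H\<close> or is dropped by a member of \<open>H\<close>. In the DES, \<open>e\<close> may occur after
  any three of \<open>a, b, c, d\<close> but after no two. Hence each pair \<open>{x, y}\<close> leaves an initial cause of
  \<open>e\<close> uncovered that both remaining events cover; distinct pairs give distinct causes, so \<open>e\<close>
  would need \<open>4 choose 2 = 6\<close> initial causes among only five events.\<close>

lemma all_less_length_snoc_take:
  "(\<forall>i < length (t @ [x]). P ((t @ [x]) ! i) (set (take i (t @ [x])))) \<longleftrightarrow>
     (\<forall>i < length t. P (t ! i) (set (take i t))) \<and> P x (set t)"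
  by (auto simp: nth_append less_Suc_eq)

lemma all_nth_pairs_iff_all_set_pairs:
  "(\<forall>i < length t. \<forall>j < length t. Q (t ! i) (t ! j)) \<longleftrightarrow> (\<forall>u \<in> set t. \<forall>v \<in> set t. Q u v)"
  by (auto simp: all_set_conv_all_nth)

lemma des_trace_snoc:
  "des_trace E C En (t @ [x]) \<longleftrightarrow>
     des_trace E C En t \<and> x \<in> E \<and> x \<notin> set t \<and>
     (\<forall>u \<in> insert x (set t). (u, x) \<notin> C \<and> (x, u) \<notin> C) \<and>
     (\<forall>X. (X, x) \<in> En \<longrightarrow> X \<inter> set t \<noteq> {})"
  unfolding des_trace_def all_nth_pairs_iff_all_set_pairs[where Q = "\<lambda>u v. (u, v) \<notin> C"]
    all_less_length_snoc_take[where P = "\<lambda>y H. \<forall>X. (X, y) \<in> En \<longrightarrow> X \<inter> H \<noteq> {}"]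
  by auto

lemma ses_trace_snoc:
  "ses_trace E C IC SC (t @ [x]) \<longleftrightarrow>
     ses_trace E C IC SC t \<and> x \<in> E \<and> x \<notin> set t \<and>
     (\<forall>u \<in> insert x (set t). (u, x) \<notin> C \<and> (x, u) \<notin> C) \<and>
     ic IC x - dc SC (set t) x \<subseteq> set t"
  unfolding ses_trace_def all_nth_pairs_iff_all_set_pairs[where Q = "\<lambda>u v. (u, v) \<notin> C"]
    all_less_length_snoc_take[where P = "\<lambda>y H. ic IC y - dc SC H y \<subseteq> H"]
  by auto

lemma ses_trace_conflict_free:
  "ses_trace E C IC SC t \<Longrightarrow> u \<in> set t \<Longrightarrow> v \<in> set t \<Longrightarrow> (u, v) \<notin> C"
  unfolding ses_trace_def all_nth_pairs_iff_all_set_pairs[where Q = "\<lambda>u v. (u, v) \<notin> C"]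
  by blast

lemma ses_enabled_iff_covered:
  "ic IC x - dc SC H x \<subseteq> H \<longleftrightarrow> (\<forall>z \<in> ic IC x. \<exists>u \<in> H. z = u \<or> (z, u, x) \<in> SC)"
  unfolding ic_def dc_def by blast

lemma ses_enabled_iff_des_enabled:
  assumes traces: "ses_traces E C IC SC = des_traces E {} En"
    and no_conflict: "\<forall>u \<in> E. \<forall>v \<in> E. (u, v) \<notin> C"
    and t: "des_trace E {} En t" and x: "x \<in> E" "x \<notin> set t"
  shows "ic IC x - dc SC (set t) x \<subseteq> set t \<longleftrightarrow> (\<forall>X. (X, x) \<in> En \<longrightarrow> X \<inter> set t \<noteq> {})"
proof -
  have same: "ses_trace E C IC SC s \<longleftrightarrow> des_trace E {} En s" for s
    using traces unfolding ses_traces_def des_traces_def by blast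
  have "set t \<subseteq> E"
    using t unfolding des_trace_def by blast
  then show ?thesis
    using same[of "t @ [x]"] same[of t] t x no_conflict
    unfolding ses_trace_snoc des_trace_snoc by blast
qed

text \<open>Each \<open>m\<close>-subset of \<open>F\<close> is exactly the set of elements of \<open>F\<close> not covering some \<open>z \<in> I\<close>.\<close>

lemma card_ge_choose_if_cover_threshold:
  assumes "finite F" "finite I"
    and covers: "\<And>H. H \<subseteq> F \<Longrightarrow> card H = Suc m \<Longrightarrow> \<forall>z \<in> I. \<exists>u \<in> H. R z u"
    and misses: "\<And>H. H \<subseteq> F \<Longrightarrow> card H = m \<Longrightarrow> \<not> (\<forall>z \<in> I. \<exists>u \<in> H. R z u)"
  shows "card F choose m \<le> card I"
proof -
  let ?uncovered = "\<lambda>z. F - {u \<in> F. R z u}"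
  have uncovered_by_subset: "p \<in> ?uncovered ` I" if p: "p \<subseteq> F" "card p = m" for p
  proof -
    obtain z where z: "z \<in> I" "\<forall>u \<in> p. \<not> R z u"
      using misses[OF p] by blast
    have "R z u" if "u \<in> F - p" for u
    proof -
      have "finite p"
        using p \<open>finite F\<close> finite_subset by blast
      then have "card (insert u p) = Suc m"
        using that p by simp
      then show ?thesis
        using covers[of "insert u p"] that p z by blast
    qed
    then have "p = ?uncovered z"
      using p z by blast
    then show ?thesis
      using z by blast
  qed
  have "{p. p \<subseteq> F \<and> card p = m} \<subseteq> ?uncovered ` I"
    using uncovered_by_subset by blast
  then have "card {p. p \<subseteq> F \<and> card p = m} \<le> card (?uncovered ` I)"
    using \<open>finite I\<close> by (intro card_mono) auto
  also have "\<dots> \<le> card I"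
    using \<open>finite I\<close> by (rule card_image_le)
  finally show ?thesis
    using n_subsets[OF \<open>finite F\<close>] by simp
qed

lemma all_pairs_meet_iff:
  assumes "finite F"
  shows "(\<forall>x \<in> F. \<forall>y \<in> F. x \<noteq> y \<longrightarrow> {x, y} \<inter> H \<noteq> {}) \<longleftrightarrow> card (F - H) \<le> 1"
  using card_le_Suc0_iff_eq[of "F - H"] assms by auto

lemma pair_des_trace_if_distinct:
  assumes En: "En = {({x, y}, e) | x y. x \<in> F \<and> y \<in> F \<and> x \<noteq> y}"
    and "e \<notin> F" "distinct t" "set t \<subseteq> F"
  shows "des_trace (insert e F) {} En t"
proof -
  have "(X, x) \<notin> En" if "x \<in> F" for X x
    using that \<open>e \<notin> F\<close> unfolding En by blast
  then show ?thesis
    using assms(3,4) nth_mem unfolding des_trace_def by blast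
qed

lemma pair_des_enabled_iff:
  assumes En: "En = {({x, y}, e) | x y. x \<in> F \<and> y \<in> F \<and> x \<noteq> y}"
    and "finite F"
  shows "(\<forall>X. (X, e) \<in> En \<longrightarrow> X \<inter> H \<noteq> {}) \<longleftrightarrow> card (F - H) \<le> 1"
proof -
  have "(\<forall>X. (X, e) \<in> En \<longrightarrow> X \<inter> H \<noteq> {}) \<longleftrightarrow> (\<forall>x \<in> F. \<forall>y \<in> F. x \<noteq> y \<longrightarrow> {x, y} \<inter> H \<noteq> {})"
    unfolding En by blast
  also have "\<dots> \<longleftrightarrow> card (F - H) \<le> 1"
    using \<open>finite F\<close> by (rule all_pairs_meet_iff)
  finally show ?thesis .
qed

lemma ses_for_pair_des_card_bound:
  assumes En: "En = {({x, y}, e) | x y. x \<in> F \<and> y \<in> F \<and> x \<noteq> y}"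
    and F: "finite F" "e \<notin> F" "2 \<le> card F"
    and ses: "ses (insert e F) C IC SC"
    and traces: "ses_traces (insert e F) C IC SC = des_traces (insert e F) {} En"
  shows "card F choose 2 \<le> Suc (card F)"
proof -
  let ?E = "insert e F"
  have des_trace_F: "des_trace ?E {} En t" if "distinct t" "set t \<subseteq> F" for t
    using pair_des_trace_if_distinct[OF En \<open>e \<notin> F\<close> that] .
  obtain tF where tF: "set tF = F" "distinct tF"
    using finite_distinct_list[OF \<open>finite F\<close>] by blast
  have "des_trace ?E {} En (tF @ [e])"
    using des_trace_F[of tF] tF F pair_des_enabled_iff[OF En \<open>finite F\<close>, of F]
    unfolding des_trace_snoc by simp
  then have "ses_trace ?E C IC SC (tF @ [e])"
    using traces unfolding ses_traces_def des_traces_def by blast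
  then have no_conflict: "\<forall>u \<in> ?E. \<forall>v \<in> ?E. (u, v) \<notin> C"
    using ses_trace_conflict_free tF by fastforce
  have enabled_iff: "(\<forall>z \<in> ic IC e. \<exists>u \<in> H. z = u \<or> (z, u, e) \<in> SC) \<longleftrightarrow> card F - card H \<le> 1"
    if "H \<subseteq> F" for H
  proof -
    have "finite H"
      using \<open>finite F\<close> \<open>H \<subseteq> F\<close> by (rule finite_subset[rotated])
    then obtain t where t: "set t = H" "distinct t"
      using finite_distinct_list by blast
    have "des_trace ?E {} En t"
      using t \<open>H \<subseteq> F\<close> by (intro des_trace_F) simp_all
    then have "ic IC e - dc SC H e \<subseteq> H \<longleftrightarrow> (\<forall>X. (X, e) \<in> En \<longrightarrow> X \<inter> H \<noteq> {})"
      using ses_enabled_iff_des_enabled[OF traces no_conflict, of t e] t \<open>H \<subseteq> F\<close> F by auto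
    then show ?thesis
      unfolding ses_enabled_iff_covered pair_des_enabled_iff[OF En \<open>finite F\<close>]
        card_Diff_subset[OF \<open>finite H\<close> \<open>H \<subseteq> F\<close>] .
  qed
  have "ic IC e \<subseteq> ?E"
    using ses unfolding ses_def ic_def by blast
  have "card F choose (card F - 2) \<le> card (ic IC e)"
  proof (rule card_ge_choose_if_cover_threshold[where R = "\<lambda>z u. z = u \<or> (z, u, e) \<in> SC"])
    show "finite (ic IC e)"
      using \<open>ic IC e \<subseteq> ?E\<close> \<open>finite F\<close> finite_subset by blast
  next
    fix H assume "H \<subseteq> F" "card H = Suc (card F - 2)"
    then show "\<forall>z \<in> ic IC e. \<exists>u \<in> H. z = u \<or> (z, u, e) \<in> SC"
      using enabled_iff by simp
  next
    fix H assume "H \<subseteq> F" "card H = card F - 2"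
    then show "\<not> (\<forall>z \<in> ic IC e. \<exists>u \<in> H. z = u \<or> (z, u, e) \<in> SC)"
      using enabled_iff \<open>2 \<le> card F\<close> by simp
  qed (use F in simp)
  also have "\<dots> \<le> card ?E"
    using \<open>ic IC e \<subseteq> ?E\<close> F by (intro card_mono) auto
  finally show ?thesis
    using F binomial_symmetric[of 2 "card F"] by simp
qed

theorem lemma6:
  fixes a b c d e :: 'e
  assumes "distinct [a, b, c, d, e]"
    and "E = {a, b, c, d, e}"
    and "En = {({x, y}, e) | x y. x \<in> {a, b, c, d} \<and> y \<in> {a, b, c, d} \<and> x \<noteq> y}"
  shows "des E {} En \<and>
    \<not> (\<exists>C IC SC. ses E C IC SC \<and> ses_traces E C IC SC = des_traces E {} En)"
proof
  let ?F = "{a, b, c, d}"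
  have E: "E = insert e ?F" and e: "e \<notin> ?F" and card_F: "card ?F = 4"
    using assms(1,2) by auto
  show "des E {} En"
    using assms(2,3) unfolding des_def by (auto simp: irrefl_def sym_def)
  show "\<not> (\<exists>C IC SC. ses E C IC SC \<and> ses_traces E C IC SC = des_traces E {} En)"
  proof
    assume "\<exists>C IC SC. ses E C IC SC \<and> ses_traces E C IC SC = des_traces E {} En"
    then obtain C IC SC where ses: "ses (insert e ?F) C IC SC"
      and traces: "ses_traces (insert e ?F) C IC SC = des_traces (insert e ?F) {} En"
      unfolding E by blast
    have "card ?F choose 2 \<le> Suc (card ?F)"
      by (rule ses_for_pair_des_card_bound[OF assms(3) _ e _ ses traces]) (simp_all add: card_F)
    then show False
      unfolding card_F by (simp add: numeral_eq_Suc)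
  qed
qed

end
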